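(* Let $h:\mathbb{R}\to[0,+\infty)$ be a continuous multiplicative function (i.e. $h(xy)=h(x)h(y)$ for all $x,y\in\mathbb{R}$) such that $h(t)\ge t$ for all $t$, $h(0)=0$ and $h(1)=1$. Let $f:[a,b]\to\mathbb{R}$ be $h$-mid-convex, i.e. $$f\Big(\frac{x+y}{2}\Big)\le h\Big(\frac12\Big)\big(f(x)+f(y)\big)\quad\text{for all } x,y\in[a,b],$$ and suppose there is $M\in\mathbb{R}$ with $f(x)\le M$ for all $x\in[a,b]$. Then $f$ is continuous. *)

theory Defs
  imports "HOL-Analysis.Analysis"
begin

definition h_mid_convex_on :: "(real \<Rightarrow> real) \<Rightarrow> real set \<Rightarrow> (real \<Rightarrow> real) \<Rightarrow> bool" where
  "h_mid_convex_on h I f \<longleftrightarrow>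
     (\<forall>x\<in>I. \<forall>y\<in>I. f ((x + y) / 2) \<le> h (1/2) * (f x + f y))"

end

theory Submission
  imports Defs
begin

text \<open>Since \<open>h t \<cdot> h (1/t) = 1\<close> with \<open>h t \<ge> t\<close> and \<open>h (1/t) \<ge> 1/t\<close>, we get \<open>h t = t\<close> for \<open>t > 0\<close>;
  in particular \<open>h (1/2) = 1/2\<close>, so \<open>h\<close>-mid-convexity is ordinary midpoint convexity.
  Iterating the midpoint inequality gives
  \<open>f ((1 - 2\<^sup>-\<^sup>n) x + 2\<^sup>-\<^sup>n y) \<le> (1 - 2\<^sup>-\<^sup>n) f x + 2\<^sup>-\<^sup>n f y\<close>; taking \<open>y = x + 2\<^sup>n v\<close> inside a ball of
  radius \<open>d\<close> around \<open>x\<close> and using \<open>f y \<le> M\<close> yields \<open>f (x + v) - f x \<le> 2\<^sup>-\<^sup>n (M - f x)\<close> for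
  \<open>|v| \<le> 2\<^sup>-\<^sup>n d\<close>. The midpoint inequality at \<open>x = midpoint (x + v) (x - v)\<close> turns this into
  a two-sided bound (Bernstein--Doetsch).\<close>

lemma multiplicative_dominating_eq_id:
  fixes h :: "real \<Rightarrow> real"
  assumes mult: "\<And>x y. h (x * y) = h x * h y"
    and ge: "\<And>t. t \<le> h t"
    and one: "h 1 = 1"
    and t: "0 < t"
  shows "h t = t"
proof (rule ccontr)
  assume "h t \<noteq> t"
  with ge have "t < h t" by (simp add: order_less_le)
  moreover have "1 / t \<le> h (1 / t)" by (rule ge)
  ultimately have "t * (1 / t) < h t * h (1 / t)"
    using t by (intro mult_less_le_imp_less) auto
  also have "\<dots> = 1" using mult[of t "1 / t"] one t by simp
  finally show False using t by simp
qed

definition midpoint_convex_on :: "'a::real_vector set \<Rightarrow> ('a \<Rightarrow> real) \<Rightarrow> bool" where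
  "midpoint_convex_on I f \<longleftrightarrow> (\<forall>x\<in>I. \<forall>y\<in>I. f (midpoint x y) \<le> (f x + f y) / 2)"

lemma midpoint_convex_onD:
  "midpoint_convex_on I f \<Longrightarrow> x \<in> I \<Longrightarrow> y \<in> I \<Longrightarrow> f (midpoint x y) \<le> (f x + f y) / 2"
  unfolding midpoint_convex_on_def by blast

lemma midpoint_convex_on_dyadic:
  fixes f :: "'a::real_vector \<Rightarrow> real"
  assumes I: "convex I" and f: "midpoint_convex_on I f" and x: "x \<in> I" and y: "y \<in> I"
  shows "f ((1 - (1/2)^n) *\<^sub>R x + (1/2)^n *\<^sub>R y) \<le> (1 - (1/2)^n) * f x + (1/2)^n * f y"
proof (induction n)
  case 0
  then show ?case by simp
next
  case (Suc n)
  define z where "z = (1 - (1/2::real)^n) *\<^sub>R x + (1/2)^n *\<^sub>R y"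
  have z: "z \<in> I"
    unfolding z_def using convexD_alt[OF I x y] by (simp add: power_le_one)
  have "(1 - (1/2::real)^Suc n) *\<^sub>R x + (1/2)^Suc n *\<^sub>R y = midpoint x z"
    unfolding z_def midpoint_def by (simp add: algebra_simps flip: scaleR_add_left)
  then have "f ((1 - (1/2)^Suc n) *\<^sub>R x + (1/2)^Suc n *\<^sub>R y) \<le> (f x + f z) / 2"
    using midpoint_convex_onD[OF f x z] by simp
  also have "\<dots> \<le> (f x + ((1 - (1/2)^n) * f x + (1/2)^n * f y)) / 2"
    using Suc.IH unfolding z_def by simp
  also have "\<dots> = (1 - (1/2)^Suc n) * f x + (1/2)^Suc n * f y"
    by (simp add: field_simps)
  finally show ?case .
qed

lemma norm_le_half_power_mult_imp_le:
  fixes v :: "'a::real_normed_vector"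
  assumes v: "norm v \<le> (1/2)^n * d"
  shows "norm v \<le> d"
proof -
  have "0 \<le> (1/2::real)^n * d" using order_trans[OF norm_ge_zero v] .
  then have "0 \<le> d"
    by (metis zero_le_mult_iff zero_less_power zero_less_divide_1_iff zero_less_numeral not_le)
  then have "(1/2::real)^n * d \<le> d" by (simp add: mult_left_le_one_le power_le_one)
  with v show ?thesis by linarith
qed

lemma midpoint_convex_on_le_near:
  fixes f :: "'a::real_normed_vector \<Rightarrow> real"
  assumes I: "convex I" and f: "midpoint_convex_on I f" and M: "\<And>y. y \<in> I \<Longrightarrow> f y \<le> M"
    and ball: "cball x d \<subseteq> I" and v: "norm v \<le> (1/2)^n * d"
  shows "f (x + v) \<le> f x + (1/2)^n * (M - f x)"
proof -
  define y where "y = x + 2^n *\<^sub>R v"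
  have "norm (2^n *\<^sub>R v) \<le> d"
    using v by (simp add: power_one_over field_simps)
  then have y: "y \<in> I" using ball unfolding y_def by (auto simp: dist_norm)
  have x: "x \<in> I"
    using ball order_trans[OF norm_ge_zero norm_le_half_power_mult_imp_le[OF v]] by auto
  have "x + v = (1 - (1/2)^n) *\<^sub>R x + (1/2)^n *\<^sub>R y"
    unfolding y_def by (simp add: algebra_simps power_one_over)
  then have "f (x + v) \<le> (1 - (1/2)^n) * f x + (1/2)^n * f y"
    using midpoint_convex_on_dyadic[OF I f x y] by simp
  also have "\<dots> \<le> (1 - (1/2)^n) * f x + (1/2)^n * M"
    using M[OF y] by simp
  finally show ?thesis by (simp add: algebra_simps)
qed

lemma midpoint_convex_on_abs_diff_le_near:
  fixes f :: "'a::real_normed_vector \<Rightarrow> real"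
  assumes I: "convex I" and f: "midpoint_convex_on I f" and M: "\<And>y. y \<in> I \<Longrightarrow> f y \<le> M"
    and ball: "cball x d \<subseteq> I" and v: "norm v \<le> (1/2)^n * d"
  shows "\<bar>f (x + v) - f x\<bar> \<le> (1/2)^n * (M - f x)"
proof -
  have "norm v \<le> d" using norm_le_half_power_mult_imp_le[OF v] .
  then have "x + v \<in> I" "x - v \<in> I" using ball by (auto simp: dist_norm)
  then have "f x \<le> (f (x + v) + f (x - v)) / 2"
    using midpoint_convex_onD[OF f] unfolding midpoint_def by fastforce
  moreover have "f (x + v) \<le> f x + (1/2)^n * (M - f x)"
    by (rule midpoint_convex_on_le_near[OF I f M ball v])
  moreover have "f (x + - v) \<le> f x + (1/2)^n * (M - f x)"
    using midpoint_convex_on_le_near[OF I f M ball, of "- v"] v by simp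
  ultimately show ?thesis by (simp add: abs_le_iff)
qed

lemma midpoint_convex_on_bounded_above_imp_continuous_on:
  fixes f :: "'a::real_normed_vector \<Rightarrow> real"
  assumes I: "open I" "convex I" and f: "midpoint_convex_on I f"
    and M: "\<And>y. y \<in> I \<Longrightarrow> f y \<le> M"
  shows "continuous_on I f"
  unfolding continuous_on_eq_continuous_at[OF \<open>open I\<close>]
proof
  fix x assume x: "x \<in> I"
  obtain d where d: "0 < d" "cball x d \<subseteq> I"
    using open_contains_cball x I(1) by blast
  have Mx: "0 \<le> M - f x" using M[OF x] by simp
  show "isCont f x"
    unfolding continuous_at_eps_delta
  proof (intro allI impI)
    fix e :: real assume e: "0 < e"
    obtain n where n: "(1/2::real)^n < e / (M - f x + 1)"
      using real_arch_pow_inv[of "e / (M - f x + 1)" "1/2"] e Mx by auto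
    show "\<exists>\<delta>>0. \<forall>y. dist y x < \<delta> \<longrightarrow> dist (f y) (f x) < e"
    proof (intro exI conjI allI impI)
      show "0 < (1/2::real)^n * d" using d by simp
      fix y assume "dist y x < (1/2)^n * d"
      then have "norm (y - x) \<le> (1/2)^n * d" by (simp add: dist_norm)
      then have "\<bar>f (x + (y - x)) - f x\<bar> \<le> (1/2)^n * (M - f x)"
        using midpoint_convex_on_abs_diff_le_near[OF I(2) f M d(2)] by blast
      also have "\<dots> \<le> (1/2)^n * (M - f x + 1)" by simp
      also have "\<dots> < e" using n Mx by (simp add: pos_less_divide_eq)
      finally show "dist (f y) (f x) < e" by (simp add: dist_real_def)
    qed
  qed
qed

lemma h_mid_convex_on_imp_midpoint_convex_on:
  assumes "h (1/2) = 1/2" "h_mid_convex_on h I f" "J \<subseteq> I"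
  shows "midpoint_convex_on J f"
  unfolding midpoint_convex_on_def
proof (intro ballI)
  fix x y assume "x \<in> J" "y \<in> J"
  then have "f ((x + y) / 2) \<le> h (1/2) * (f x + f y)"
    using assms(2,3) unfolding h_mid_convex_on_def by blast
  then show "f (midpoint x y) \<le> (f x + f y) / 2"
    using assms(1) by (simp add: midpoint_def)
qed

theorem lemma3p1:
  fixes h f :: "real \<Rightarrow> real" and a b M :: real
  assumes h_cont: "continuous_on UNIV h"
    and h_nonneg: "\<And>x. h x \<ge> 0"
    and h_mult: "\<And>x y. h (x * y) = h x * h y"
    and h_ge: "\<And>t. h t \<ge> t"
    and h0: "h 0 = 0"
    and h1: "h 1 = 1"
    and f_mid: "h_mid_convex_on h {a..b} f"
    and f_bdd: "\<And>x. x \<in> {a..b} \<Longrightarrow> f x \<le> M"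
  shows "continuous_on {a<..<b} f"
proof (rule midpoint_convex_on_bounded_above_imp_continuous_on)
  have "h (1/2) = 1/2"
    using multiplicative_dominating_eq_id[OF h_mult h_ge h1] by simp
  then show "midpoint_convex_on {a<..<b} f"
    using f_mid by (rule h_mid_convex_on_imp_midpoint_convex_on) auto
  show "f x \<le> M" if "x \<in> {a<..<b}" for x
    using f_bdd that by simp
qed auto

end
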